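(* In the setting of the addition algorithm, for every $\varphi\in\mathbb{R}^V$ with $M(\varphi)\le L(\tau,\varepsilon)$, $$\sqrt{J^+(\varphi)J^-(\varphi)}\ge\exp\Big(-\frac{1}{\varepsilon^2}\sum_{v\in V}\tau'\big(v,1+\max_{w\sim v}r(\varphi,w)\big)^2\Big).$$
   Context: Addition algorithm. Let $G=(V,E)$ be a finite connected graph ($v\sim w$ means $(v,w)\in E$), $\tau:V\to[0,\infty)$, $0<\varepsilon\le1/2$, and fix a total order $\preceq$ on $V$. Let $f:\mathbb{R}\to\mathbb{R}$ be $f(x)=0$ for $|x|\ge1$, $f(x)=(1+x)/\varepsilon$ on $[-1,-1+\varepsilon]$, $f(x)=1$ on $[-1+\varepsilon,1-\varepsilon]$, $f(x)=(1-x)/\varepsilon$ on $[1-\varepsilon,1]$. For $v\in V$, $h,t\in\mathbb{R}$ let $m_{v,h,t}(h')=\min(\tau(v)-t,\varepsilon/2)f(h'-h)+t$ if $\tau(v)\ge t$, and $m_{v,h,t}(h')=t$ if $\tau(v)<t$. On input $\varphi\in\mathbb{R}^V$ the algorithm outputs an ordering $P_1,\dots,P_{|V|}$ of $V$, numbers $s_k$ and functions $\tau_k:V\times\mathbb{R}\to\mathbb{R}$: set $\tau_1(v,h)=\tau(v)$; for $k=1,\dots,|V|$: let $P_k$ be the vertex $v\in V\setminus\{P_1,\dots,P_{k-1}\}$ minimizing $\tau_k(v,\varphi_v)$ (ties broken by taking the $\preceq$-smallest); set $s_k=\tau_k(P_k,\varphi_{P_k})$; if $k<|V|$ set $\tau_{k+1}(v,h)=\tau_k(v,h)$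 if $v\in\{P_1,\dots,P_k\}$ or $v\not\sim P_k$, and $\tau_{k+1}(v,h)=\min(\tau_k(v,h),m_{v,\varphi_{P_k},s_k}(h))$ otherwise. Define $T^+(\varphi)_{P_k}=\varphi_{P_k}+s_k$ ($1\le k\le|V|$) and $T^-(\varphi)=2\varphi-T^+(\varphi)$. Each $\tau_k(v,\cdot)$ is right-differentiable with Lipschitz constant at most $1/2$; $\partial_2\tau_k$ denotes the right derivative in the second variable. $J^+(\varphi):=\prod_{k=1}^{|V|}(1+\partial_2\tau_k(P_k,\varphi_{P_k}))$, $J^-(\varphi):=\prod_{k=1}^{|V|}(1-\partial_2\tau_k(P_k,\varphi_{P_k}))$. $d_G$ is graph distance; $\tau'(v,k):=\max\{\tau(v)-\tau(w):d_G(v,w)\le k\}$; $L(\tau,\varepsilon):=\sup\{k\ge0:\tau'(v,k)\le\varepsilon/2\ \forall v\}-1$ (possibly $+\infty$). $\mathcal{E}(\varphi):=\{(v,w)\in E:|\varphi_v-\varphi_w|\ge1-\varepsilon\}$; $v\leftrightarrow w$ if connected by edges of $\mathcal{E}(\varphi)$ (including $v=w$); $r(\varphi,v):=\max\{d_G(v,w):v\leftrightarrow w\}$, $M(\varphi):=\max\{d_G(v,w):v\leftrightarrow w\}$. *)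

theory Defs
  imports "HOL-Analysis.Analysis" "HOL-Library.Extended_Real"
begin

text \<open>Graph: finite vertex set V, symmetric edge relation E (v \<sim> w iff E v w).
  The fixed total order on V is the order of the linorder type of vertices.\<close>

definition edge_rel :: "'v set \<Rightarrow> ('v \<Rightarrow> 'v \<Rightarrow> bool) \<Rightarrow> ('v \<times> 'v) set" where
  "edge_rel V E = {(a, b). a \<in> V \<and> b \<in> V \<and> E a b}"

definition gdist :: "'v set \<Rightarrow> ('v \<Rightarrow> 'v \<Rightarrow> bool) \<Rightarrow> 'v \<Rightarrow> 'v \<Rightarrow> nat" where
  "gdist V E v w = (LEAST n. (v, w) \<in> (edge_rel V E) ^^ n)"

definition is_graph :: "'v set \<Rightarrow> ('v \<Rightarrow> 'v \<Rightarrow> bool) \<Rightarrow> bool" where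
  "is_graph V E \<longleftrightarrow> finite V \<and> V \<noteq> {} \<and>
     (\<forall>a b. E a b \<longrightarrow> a \<in> V \<and> b \<in> V) \<and> (\<forall>a b. E a b \<longrightarrow> E b a) \<and> (\<forall>a. \<not> E a a)"

definition connected_graph :: "'v set \<Rightarrow> ('v \<Rightarrow> 'v \<Rightarrow> bool) \<Rightarrow> bool" where
  "connected_graph V E \<longleftrightarrow> (\<forall>v\<in>V. \<forall>w\<in>V. (v, w) \<in> (edge_rel V E)\<^sup>*)"

definition fcut :: "real \<Rightarrow> real \<Rightarrow> real" where
  "fcut eps x = (if \<bar>x\<bar> \<ge> 1 then 0
     else if x \<le> -1 + eps then (1 + x) / eps
     else if x \<le> 1 - eps then 1
     else (1 - x) / eps)"

definition mfun :: "('v \<Rightarrow> real) \<Rightarrow> real \<Rightarrow> 'v \<Rightarrow> real \<Rightarrow> real \<Rightarrow> real \<Rightarrow> real" where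
  "mfun \<tau> eps v h t h' = (if \<tau> v \<ge> t then min (\<tau> v - t) (eps / 2) * fcut eps (h' - h) + t else t)"

text \<open>State of the addition algorithm after n steps:
  (list [P_1,...,P_n], list [s_1,...,s_n], list [tau_1,...,tau_{n+1}]).\<close>
primrec addalg :: "'v::linorder set \<Rightarrow> ('v \<Rightarrow> 'v \<Rightarrow> bool) \<Rightarrow> ('v \<Rightarrow> real) \<Rightarrow> real \<Rightarrow> ('v \<Rightarrow> real)
     \<Rightarrow> nat \<Rightarrow> 'v list \<times> real list \<times> ('v \<Rightarrow> real \<Rightarrow> real) list" where
  "addalg V E \<tau> eps \<phi> 0 = ([], [], [\<lambda>v h. \<tau> v])"
| "addalg V E \<tau> eps \<phi> (Suc n) =
     (let (Ps, ss, ts) = addalg V E \<tau> eps \<phi> n;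
          tk = last ts;
          R = V - set Ps;
          p = (LEAST v. v \<in> R \<and> (\<forall>w\<in>R. tk v (\<phi> v) \<le> tk w (\<phi> w)));
          s = tk p (\<phi> p);
          tnew = (\<lambda>v h. if v \<in> set (Ps @ [p]) \<or> \<not> E v p then tk v h
                        else min (tk v h) (mfun \<tau> eps v (\<phi> p) s h))
      in (Ps @ [p], ss @ [s], ts @ [tnew]))"

definition alg_P :: "'v::linorder set \<Rightarrow> ('v \<Rightarrow> 'v \<Rightarrow> bool) \<Rightarrow> ('v \<Rightarrow> real) \<Rightarrow> real \<Rightarrow> ('v \<Rightarrow> real) \<Rightarrow> nat \<Rightarrow> 'v" where
  "alg_P V E \<tau> eps \<phi> k = fst (addalg V E \<tau> eps \<phi> (card V)) ! (k - 1)"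

definition alg_tau :: "'v::linorder set \<Rightarrow> ('v \<Rightarrow> 'v \<Rightarrow> bool) \<Rightarrow> ('v \<Rightarrow> real) \<Rightarrow> real \<Rightarrow> ('v \<Rightarrow> real) \<Rightarrow> nat \<Rightarrow> 'v \<Rightarrow> real \<Rightarrow> real" where
  "alg_tau V E \<tau> eps \<phi> k = snd (snd (addalg V E \<tau> eps \<phi> (card V))) ! (k - 1)"

definition rderiv :: "(real \<Rightarrow> real) \<Rightarrow> real \<Rightarrow> real" where
  "rderiv g h = Lim (at_right 0) (\<lambda>t. (g (h + t) - g h) / t)"

definition Jplus :: "'v::linorder set \<Rightarrow> ('v \<Rightarrow> 'v \<Rightarrow> bool) \<Rightarrow> ('v \<Rightarrow> real) \<Rightarrow> real \<Rightarrow> ('v \<Rightarrow> real) \<Rightarrow> real" where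
  "Jplus V E \<tau> eps \<phi> = (\<Prod>k=1..card V.
     1 + rderiv (alg_tau V E \<tau> eps \<phi> k (alg_P V E \<tau> eps \<phi> k)) (\<phi> (alg_P V E \<tau> eps \<phi> k)))"

definition Jminus :: "'v::linorder set \<Rightarrow> ('v \<Rightarrow> 'v \<Rightarrow> bool) \<Rightarrow> ('v \<Rightarrow> real) \<Rightarrow> real \<Rightarrow> ('v \<Rightarrow> real) \<Rightarrow> real" where
  "Jminus V E \<tau> eps \<phi> = (\<Prod>k=1..card V.
     1 - rderiv (alg_tau V E \<tau> eps \<phi> k (alg_P V E \<tau> eps \<phi> k)) (\<phi> (alg_P V E \<tau> eps \<phi> k)))"

definition tau' :: "'v set \<Rightarrow> ('v \<Rightarrow> 'v \<Rightarrow> bool) \<Rightarrow> ('v \<Rightarrow> real) \<Rightarrow> 'v \<Rightarrow> nat \<Rightarrow> real" where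
  "tau' V E \<tau> v k = Max {\<tau> v - \<tau> w | w. w \<in> V \<and> gdist V E v w \<le> k}"

definition Lcap :: "'v set \<Rightarrow> ('v \<Rightarrow> 'v \<Rightarrow> bool) \<Rightarrow> ('v \<Rightarrow> real) \<Rightarrow> real \<Rightarrow> ereal" where
  "Lcap V E \<tau> eps = (SUP k \<in> {k::nat. \<forall>v\<in>V. tau' V E \<tau> v k \<le> eps / 2}. ereal (real k)) - 1"

definition crit_rel :: "'v set \<Rightarrow> ('v \<Rightarrow> 'v \<Rightarrow> bool) \<Rightarrow> real \<Rightarrow> ('v \<Rightarrow> real) \<Rightarrow> ('v \<times> 'v) set" where
  "crit_rel V E eps \<phi> = {(a, b). a \<in> V \<and> b \<in> V \<and> E a b \<and> \<bar>\<phi> a - \<phi> b\<bar> \<ge> 1 - eps}"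

definition conn :: "'v set \<Rightarrow> ('v \<Rightarrow> 'v \<Rightarrow> bool) \<Rightarrow> real \<Rightarrow> ('v \<Rightarrow> real) \<Rightarrow> 'v \<Rightarrow> 'v \<Rightarrow> bool" where
  "conn V E eps \<phi> v w \<longleftrightarrow> (v, w) \<in> (crit_rel V E eps \<phi>)\<^sup>*"

definition rrad :: "'v set \<Rightarrow> ('v \<Rightarrow> 'v \<Rightarrow> bool) \<Rightarrow> real \<Rightarrow> ('v \<Rightarrow> real) \<Rightarrow> 'v \<Rightarrow> nat" where
  "rrad V E eps \<phi> v = Max {gdist V E v w | w. w \<in> V \<and> conn V E eps \<phi> v w}"

definition Mrad :: "'v set \<Rightarrow> ('v \<Rightarrow> 'v \<Rightarrow> bool) \<Rightarrow> real \<Rightarrow> ('v \<Rightarrow> real) \<Rightarrow> nat" where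
  "Mrad V E eps \<phi> = Max {gdist V E v w | v w. v \<in> V \<and> w \<in> V \<and> conn V E eps \<phi> v w}"

text \<open>max over neighbours w of v of r(phi,w); 0 if v has no neighbours (only possible if |V| = 1).\<close>
definition maxnbr_r :: "'v set \<Rightarrow> ('v \<Rightarrow> 'v \<Rightarrow> bool) \<Rightarrow> real \<Rightarrow> ('v \<Rightarrow> real) \<Rightarrow> 'v \<Rightarrow> nat" where
  "maxnbr_r V E eps \<phi> v = Max (insert 0 {rrad V E eps \<phi> w | w. w \<in> V \<and> E v w})"

end

theory Submission
  imports Defs
begin

text \<open>Each \<open>\<tau>\<^sub>k(v, \<cdot>)\<close> is the minimum of the constant \<open>\<tau>(v)\<close> and of bumps
  \<open>m\<^bsub>v,\<phi>(P\<^sub>j),s\<^sub>j\<^esub>\<close> for neighbours \<open>P\<^sub>j\<close> of \<open>v\<close> chosen earlier, so its right derivative is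
  \<open>0\<close> or the slope of one bump, bounded by \<open>1/2\<close> and by \<open>(\<tau>(v) - s\<^sub>j)/\<epsilon>\<close>. Along the
  algorithm every value \<open>\<tau>\<^sub>k(v, \<phi>\<^sub>v)\<close> dominates \<open>\<tau>(u)\<close> for some \<open>u\<close> in the
  \<open>\<E>(\<phi>)\<close>-cluster of \<open>v\<close>: across a critical edge the cluster of the new vertex is
  inherited, and across a non-critical edge the bump has full height, which by
  \<open>M(\<phi>) \<le> L(\<tau>, \<epsilon>)\<close> lifts it above \<open>\<tau>(v)\<close>. Applied to \<open>s\<^sub>j = \<tau>\<^sub>j(P\<^sub>j, \<phi>(P\<^sub>j))\<close> this
  gives \<open>\<tau>(v) - s\<^sub>j \<le> \<tau>'(v, 1 + max {r(\<phi>, w) | w \<sim> v})\<close>, and then every factor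
  \<open>(1 + D)(1 - D) = 1 - D\<^sup>2 \<ge> exp(-2D\<^sup>2)\<close> of \<open>J\<^sup>+ J\<^sup>-\<close> is controlled.\<close>

lemma rderiv_eqI:
  assumes "(g has_real_derivative d) (at_right h)"
  shows "rderiv g h = d"
proof -
  have "((\<lambda>y. (g y - g h) / (y - h)) \<longlongrightarrow> d) (at_right h)"
    using assms by (simp add: has_field_derivative_iff)
  then have "((\<lambda>t. (g (h + t) - g h) / t) \<longlongrightarrow> d) (at_right 0)"
    by (simp add: at_right_to_0[of h] filterlim_filtermap add.commute)
  then show ?thesis
    unfolding rderiv_def by (rule tendsto_Lim[rotated]) simp
qed

lemma has_real_derivative_min_at_right:
  assumes f: "(f has_real_derivative df) (at_right x)"
    and g: "(g has_real_derivative dg) (at_right x)"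
  shows "\<exists>d\<in>{df, dg}. ((\<lambda>y. min (f y) (g y)) has_real_derivative d) (at_right x)"
proof -
  have lim: "((\<lambda>y. g y - f y) \<longlongrightarrow> g x - f x) (at_right x)"
    using f g by (intro tendsto_diff) (auto dest!: DERIV_continuous simp: continuous_within)
  consider "f x < g x" | "g x < f x" | "f x = g x"
    by linarith
  then show ?thesis
  proof cases
    case 1
    then have "\<forall>\<^sub>F y in at_right x. min (f y) (g y) = f y"
      using order_tendstoD(1)[OF lim, of 0] by (simp add: eventually_mono)
    then have "((\<lambda>y. min (f y) (g y)) has_real_derivative df) (at_right x)"
      using f 1 by (simp add: has_field_derivative_cong_eventually)
    then show ?thesis by blast
  next
    case 2
    then have "\<forall>\<^sub>F y in at_right x. min (f y) (g y) = g y"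
      using order_tendstoD(2)[OF lim, of 0] by (simp add: eventually_mono)
    then have "((\<lambda>y. min (f y) (g y)) has_real_derivative dg) (at_right x)"
      using g 2 by (simp add: has_field_derivative_cong_eventually)
    then show ?thesis by blast
  next
    case 3
    \<comment> \<open>to the right of x the difference quotient of the minimum is the minimum of the quotients\<close>
    have "\<forall>\<^sub>F y in at_right x. min ((f y - f x) / (y - x)) ((g y - g x) / (y - x))
        = (min (f y) (g y) - min (f x) (g x)) / (y - x)"
      using eventually_at_right_less[of x] by eventually_elim (simp add: 3 min_def divide_le_cancel)
    moreover have "((\<lambda>y. min ((f y - f x) / (y - x)) ((g y - g x) / (y - x))) \<longlongrightarrow> min df dg) (at_right x)"
      using f g by (intro tendsto_min) (simp_all add: has_field_derivative_iff)
    ultimately have "((\<lambda>y. min (f y) (g y)) has_real_derivative min df dg) (at_right x)"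
      unfolding has_field_derivative_iff by (rule Lim_transform_eventually[rotated])
    then show ?thesis by (metis insertCI min_def)
  qed
qed

lemma has_real_derivative_at_right_affine:
  assumes "x < b" and "\<And>y. x \<le> y \<Longrightarrow> y < b \<Longrightarrow> g y = c * y + e"
  shows "(g has_real_derivative c) (at_right x)"
proof -
  have "((\<lambda>y. c * y + e) has_real_derivative c) (at_right x)"
    by (auto intro!: derivative_eq_intros)
  moreover have "\<forall>\<^sub>F y in at_right x. c * y + e = g y"
    using eventually_at_right_real[OF assms(1)] by eventually_elim (simp add: assms(2))
  ultimately show ?thesis
    using assms(2)[of x] assms(1) by (simp add: has_field_derivative_cong_eventually)
qed

lemma fcut_has_right_derivative:
  assumes "0 < eps" "eps \<le> 1"
  shows "\<exists>d. ((\<lambda>y. fcut eps (y - a)) has_real_derivative d) (at_right x) \<and> \<bar>d\<bar> \<le> 1 / eps"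
proof -
  have piece: "\<exists>d. ((\<lambda>y. fcut eps (y - a)) has_real_derivative d) (at_right x) \<and> \<bar>d\<bar> \<le> 1 / eps"
    if "x - a < b" "\<bar>c\<bar> \<le> 1 / eps" "\<And>y. x \<le> y \<Longrightarrow> y - a < b \<Longrightarrow> fcut eps (y - a) = c * y + e"
    for b c e
  proof -
    have "((\<lambda>y. fcut eps (y - a)) has_real_derivative c) (at_right x)"
      by (rule has_real_derivative_at_right_affine[of x "b + a"]) (use that in auto)
    then show ?thesis using that(2) by blast
  qed
  consider "x - a < -1" | "-1 \<le> x - a" "x - a < -1 + eps" | "-1 + eps \<le> x - a" "x - a < 1 - eps"
    | "1 - eps \<le> x - a" "x - a < 1" | "1 \<le> x - a"
    by linarith
  then show ?thesis
  proof cases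
    case 1
    show ?thesis by (rule piece[of "-1" 0 0]) (use 1 assms in \<open>auto simp: fcut_def\<close>)
  next
    case 2
    show ?thesis by (rule piece[of "-1 + eps" "1 / eps" "(1 - a) / eps"])
      (use 2 assms in \<open>auto simp: fcut_def field_simps\<close>)
  next
    case 3
    show ?thesis by (rule piece[of "1 - eps" 0 1]) (use 3 assms in \<open>auto simp: fcut_def field_simps\<close>)
  next
    case 4
    show ?thesis
    proof (rule piece[of 1 "- 1 / eps" "(1 + a) / eps"])
      fix y assume "x \<le> y" "y - a < 1"
      then show "fcut eps (y - a) = - 1 / eps * y + (1 + a) / eps"
        using 4 assms by (cases "y = a + 1 - eps") (auto simp: fcut_def field_simps)
    qed (use 4 assms in auto)
  next
    case 5
    show ?thesis by (rule piece[of "x - a + 1" 0 0]) (use 5 assms in \<open>auto simp: fcut_def\<close>)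
  qed
qed

lemma mfun_has_right_derivative:
  assumes "0 < eps" "eps \<le> 1" "t \<le> \<tau> v"
  shows "\<exists>d. (mfun \<tau> eps v a t has_real_derivative d) (at_right h)
           \<and> \<bar>d\<bar> \<le> min (\<tau> v - t) (eps / 2) / eps"
proof -
  define c where "c = min (\<tau> v - t) (eps / 2)"
  have c: "0 \<le> c" using assms by (simp add: c_def)
  obtain d where d: "((\<lambda>y. fcut eps (y - a)) has_real_derivative d) (at_right h)" "\<bar>d\<bar> \<le> 1 / eps"
    using fcut_has_right_derivative[OF assms(1,2)] by blast
  have "mfun \<tau> eps v a t = (\<lambda>y. c * fcut eps (y - a) + t)"
    using assms(3) by (simp add: mfun_def c_def fun_eq_iff)
  moreover have "((\<lambda>y. c * fcut eps (y - a) + t) has_real_derivative c * d) (at_right h)"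
    using d(1) by (auto intro!: derivative_eq_intros)
  moreover have "\<bar>c * d\<bar> \<le> c / eps"
    using mult_left_mono[OF d(2) c] c by (simp add: abs_mult)
  ultimately show ?thesis unfolding c_def by metis
qed

lemma Least_argmin_in:
  fixes g :: "'a::linorder \<Rightarrow> 'b::linorder"
  assumes "finite R" "R \<noteq> {}"
  shows "(LEAST v. v \<in> R \<and> (\<forall>w\<in>R. g v \<le> g w)) \<in> R"
proof -
  let ?P = "\<lambda>v. v \<in> R \<and> (\<forall>w\<in>R. g v \<le> g w)"
  have "\<exists>v. ?P v"
    using arg_min_if_finite[OF assms, of g] by (meson not_le)
  moreover have "finite {v. ?P v}"
    using assms(1) by (rule rev_finite_subset) blast
  ultimately have "?P (Min {v. ?P v})" and "(LEAST v. ?P v) = Min {v. ?P v}"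
    using Min_in[of "{v. ?P v}"] Least_Min[of ?P] by auto
  then show ?thesis
    by simp
qed

lemma exp_neg_twice_le_one_minus:
  fixes x :: real
  assumes "0 \<le> x" "x \<le> 1 / 4"
  shows "exp (- 2 * x) \<le> 1 - x"
proof -
  have "0 \<le> x * (1 - 2 * x)"
    using assms by simp
  then have "1 \<le> (1 - x) * (1 + 2 * x)"
    by (simp add: algebra_simps)
  also have "\<dots> \<le> (1 - x) * exp (2 * x)"
    using assms exp_ge_add_one_self[of "2 * x"] by (intro mult_left_mono) auto
  finally show ?thesis
    by (simp add: exp_minus field_simps)
qed

lemma exp_le_prod_one_minus_square:
  fixes x b :: "'a \<Rightarrow> real"
  assumes "finite I" and "\<And>i. i \<in> I \<Longrightarrow> \<bar>x i\<bar> \<le> 1 / 2" and "\<And>i. i \<in> I \<Longrightarrow> \<bar>x i\<bar> \<le> b i"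
  shows "exp (- 2 * (\<Sum>i\<in>I. (b i)\<^sup>2)) \<le> (\<Prod>i\<in>I. 1 - (x i)\<^sup>2)"
proof -
  have "exp (- 2 * (\<Sum>i\<in>I. (b i)\<^sup>2)) = (\<Prod>i\<in>I. exp (- 2 * (b i)\<^sup>2))"
    using assms(1) by (simp add: exp_sum sum_distrib_left)
  also have "\<dots> \<le> (\<Prod>i\<in>I. 1 - (x i)\<^sup>2)"
  proof (rule prod_mono)
    fix i assume i: "i \<in> I"
    have x2: "(x i)\<^sup>2 \<le> 1 / 4" "(x i)\<^sup>2 \<le> (b i)\<^sup>2"
      using power_mono[OF assms(2)[OF i] abs_ge_zero, of 2] power_mono[OF assms(3)[OF i] abs_ge_zero, of 2]
      by (simp_all add: power_divide)
    have "exp (- 2 * (b i)\<^sup>2) \<le> exp (- 2 * (x i)\<^sup>2)"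
      using x2(2) by simp
    also have "\<dots> \<le> 1 - (x i)\<^sup>2"
      using x2(1) by (intro exp_neg_twice_le_one_minus) simp_all
    finally show "0 \<le> exp (- 2 * (b i)\<^sup>2) \<and> exp (- 2 * (b i)\<^sup>2) \<le> 1 - (x i)\<^sup>2"
      by simp
  qed
  finally show ?thesis .
qed

lemma conn_refl: "conn V E eps \<phi> v v"
  by (simp add: conn_def)

locale finite_connected_graph =
  fixes V :: "'v set" and E :: "'v \<Rightarrow> 'v \<Rightarrow> bool"
  assumes graph: "is_graph V E" and connected: "connected_graph V E"
begin

lemma finite_V: "finite V"
  using graph by (simp add: is_graph_def)

lemma edge_in_V: "E a b \<Longrightarrow> a \<in> V \<and> b \<in> V"
  using graph by (simp add: is_graph_def)

lemma gdist_path: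
  assumes "v \<in> V" "w \<in> V"
  shows "(v, w) \<in> edge_rel V E ^^ gdist V E v w"
proof -
  have "\<exists>n. (v, w) \<in> edge_rel V E ^^ n"
    using connected assms unfolding connected_graph_def by (blast dest: rtrancl_imp_relpow)
  then show ?thesis
    unfolding gdist_def by (rule LeastI_ex)
qed

lemma gdist_self: "gdist V E v v = 0"
  unfolding gdist_def by (rule Least_eq_0) simp

lemma gdist_edge_le:
  assumes "E v p" "u \<in> V"
  shows "gdist V E v u \<le> Suc (gdist V E p u)"
proof -
  have "(v, p) \<in> edge_rel V E"
    using assms edge_in_V by (simp add: edge_rel_def)
  then have "(v, u) \<in> edge_rel V E ^^ Suc (gdist V E p u)"
    using gdist_path assms edge_in_V by (blast intro: relpow_Suc_I2)
  then show ?thesis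
    unfolding gdist_def by (rule Least_le)
qed

lemma gdist_le_rrad:
  assumes "u \<in> V" "conn V E eps \<phi> p u"
  shows "gdist V E p u \<le> rrad V E eps \<phi> p"
proof -
  have "finite {gdist V E p w | w. w \<in> V \<and> conn V E eps \<phi> p w}"
    using finite_V by (auto intro: finite_subset[of _ "gdist V E p ` V"])
  then show ?thesis
    unfolding rrad_def using assms by (auto intro: Max_ge)
qed

lemma gdist_le_Mrad:
  assumes "p \<in> V" "u \<in> V" "conn V E eps \<phi> p u"
  shows "gdist V E p u \<le> Mrad V E eps \<phi>"
proof -
  have "finite {gdist V E v w | v w. v \<in> V \<and> w \<in> V \<and> conn V E eps \<phi> v w}"
    using finite_V by (auto intro: finite_subset[of _ "(\<lambda>(v, w). gdist V E v w) ` (V \<times> V)"])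
  then show ?thesis
    unfolding Mrad_def using assms by (auto intro: Max_ge)
qed

lemma rrad_le_maxnbr_r:
  assumes "E v p"
  shows "rrad V E eps \<phi> p \<le> maxnbr_r V E eps \<phi> v"
proof -
  have "finite {rrad V E eps \<phi> w | w. w \<in> V \<and> E v w}"
    using finite_V by (auto intro: finite_subset[of _ "rrad V E eps \<phi> ` V"])
  then show ?thesis
    unfolding maxnbr_r_def using assms edge_in_V by (auto intro: Max_ge)
qed

lemma diff_le_tau':
  assumes "v \<in> V" "w \<in> V" "gdist V E v w \<le> k"
  shows "\<tau> v - \<tau> w \<le> tau' V E \<tau> v k"
proof -
  have "finite {\<tau> v - \<tau> w | w. w \<in> V \<and> gdist V E v w \<le> k}"
    using finite_V by (auto intro: finite_subset[of _ "(\<lambda>w. \<tau> v - \<tau> w) ` V"])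
  then show ?thesis
    unfolding tau'_def using assms by (auto intro: Max_ge)
qed

lemma tau'_nonneg: "v \<in> V \<Longrightarrow> 0 \<le> tau' V E \<tau> v k"
  using diff_le_tau'[of v v] by (simp add: gdist_self)

lemma conn_edge:
  assumes "E v p" "1 - eps \<le> \<bar>\<phi> v - \<phi> p\<bar>" "conn V E eps \<phi> p u"
  shows "conn V E eps \<phi> v u"
proof -
  have "(v, p) \<in> crit_rel V E eps \<phi>"
    using assms edge_in_V by (simp add: crit_rel_def)
  then show ?thesis
    using assms(3) unfolding conn_def by (rule converse_rtrancl_into_rtrancl)
qed

end

lemma le_LcapE:
  assumes "ereal (real m) \<le> Lcap V E \<tau> eps"
  obtains k where "Suc m \<le> k" "\<forall>v\<in>V. tau' V E \<tau> v k \<le> eps / 2"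
proof -
  define K where "K = {k. \<forall>v\<in>V. tau' V E \<tau> v k \<le> eps / 2}"
  have "\<exists>k\<in>K. Suc m \<le> k"
  proof (rule ccontr)
    assume "\<not> ?thesis"
    then have "(SUP k\<in>K. ereal (real k)) \<le> ereal (real m)"
      by (intro SUP_least) auto
    then have "(SUP k\<in>K. ereal (real k)) - 1 \<le> ereal (real m - 1)"
      by (cases "SUP k\<in>K. ereal (real k)") (auto simp: one_ereal_def)
    moreover have "ereal (real m) \<le> (SUP k\<in>K. ereal (real k)) - 1"
      using assms unfolding Lcap_def K_def .
    ultimately have "ereal (real m) \<le> ereal (real m - 1)"
      by (rule order_trans[rotated])
    then show False
      by simp
  qed
  then show ?thesis
    using that unfolding K_def by blast
qed

locale addition_algorithm = finite_connected_graph V E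
  for V :: "'v::linorder set" and E :: "'v \<Rightarrow> 'v \<Rightarrow> bool" +
  fixes \<tau> :: "'v \<Rightarrow> real" and eps :: real and \<phi> :: "'v \<Rightarrow> real"
  assumes eps_pos: "0 < eps" and eps_le_1: "eps \<le> 1"
    and variation_le: "\<And>v w. v \<in> V \<Longrightarrow> w \<in> V \<Longrightarrow> gdist V E v w \<le> Suc (Mrad V E eps \<phi>)
      \<Longrightarrow> \<tau> v - \<tau> w \<le> eps / 2"
begin

definition cluster_min_le :: "'v \<Rightarrow> real \<Rightarrow> bool" where
  "cluster_min_le v t \<longleftrightarrow> (\<exists>u\<in>V. conn V E eps \<phi> v u \<and> \<tau> u \<le> t)"

lemma cluster_min_le_self: "v \<in> V \<Longrightarrow> \<tau> v \<le> t \<Longrightarrow> cluster_min_le v t"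
  unfolding cluster_min_le_def using conn_refl[of V E eps \<phi> v] by blast

lemma cluster_min_le_mono: "cluster_min_le v t \<Longrightarrow> t \<le> t' \<Longrightarrow> cluster_min_le v t'"
  unfolding cluster_min_le_def by force

lemma cluster_min_le_min:
  "cluster_min_le v t \<Longrightarrow> cluster_min_le v t' \<Longrightarrow> cluster_min_le v (min t t')"
  by (simp add: min_def)

lemma cluster_min_le_mfun:
  assumes "E v p" and "cluster_min_le p t"
  shows "cluster_min_le v (mfun \<tau> eps v (\<phi> p) t (\<phi> v))"
proof -
  obtain u where u: "u \<in> V" "conn V E eps \<phi> p u" "\<tau> u \<le> t"
    using assms(2) unfolding cluster_min_le_def by blast
  have v: "v \<in> V" and p: "p \<in> V"
    using assms(1) edge_in_V by auto
  show ?thesis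
  proof (cases "t \<le> \<tau> v")
    case False
    then show ?thesis
      using v by (simp add: mfun_def cluster_min_le_self)
  next
    case True
    show ?thesis
    proof (cases "1 - eps \<le> \<bar>\<phi> v - \<phi> p\<bar>")
      case True
      then have "cluster_min_le v t"
        unfolding cluster_min_le_def using conn_edge[OF assms(1) _ u(2)] u by blast
      moreover have "0 \<le> fcut eps (\<phi> v - \<phi> p)"
        using eps_pos by (simp add: fcut_def)
      ultimately show ?thesis
        using \<open>t \<le> \<tau> v\<close> eps_pos by (auto simp: mfun_def intro: cluster_min_le_mono)
    next
      case False
      \<comment> \<open>not a critical edge: the bump is at full height at v, and v is close to u\<close>
      then have "fcut eps (\<phi> v - \<phi> p) = 1"
        using eps_pos by (auto simp: fcut_def)
      moreover have "gdist V E v u \<le> Suc (Mrad V E eps \<phi>)"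
        using gdist_edge_le[OF assms(1) u(1)] gdist_le_Mrad[OF p u(1,2)] by linarith
      then have "\<tau> v - \<tau> u \<le> eps / 2"
        using variation_le v u(1) by blast
      ultimately have "\<tau> v \<le> mfun \<tau> eps v (\<phi> p) t (\<phi> v)"
        using \<open>t \<le> \<tau> v\<close> u(3) by (simp add: mfun_def)
      then show ?thesis
        using v cluster_min_le_self by blast
    qed
  qed
qed

lemma cluster_min_le_imp_diff_le_tau':
  assumes "E v p" and "cluster_min_le p t"
  shows "\<tau> v - t \<le> tau' V E \<tau> v (1 + maxnbr_r V E eps \<phi> v)"
proof -
  obtain u where u: "u \<in> V" "conn V E eps \<phi> p u" "\<tau> u \<le> t"
    using assms(2) unfolding cluster_min_le_def by blast
  have "gdist V E v u \<le> 1 + maxnbr_r V E eps \<phi> v"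
    using gdist_edge_le[OF assms(1) u(1)] gdist_le_rrad[OF u(1,2)]
      rrad_le_maxnbr_r[OF assms(1), where eps = eps and \<phi> = \<phi>]
    by linarith
  then have "\<tau> v - \<tau> u \<le> tau' V E \<tau> v (1 + maxnbr_r V E eps \<phi> v)"
    using assms(1) edge_in_V by (blast intro: diff_le_tau' u(1))
  then show ?thesis
    using u(3) by linarith
qed

definition slope_bound :: "'v \<Rightarrow> real" where
  "slope_bound v = tau' V E \<tau> v (1 + maxnbr_r V E eps \<phi> v) / eps"

definition right_slopes_bounded :: "'v \<Rightarrow> (real \<Rightarrow> real) \<Rightarrow> bool" where
  "right_slopes_bounded v g \<longleftrightarrow>
     (\<forall>h. \<exists>d. (g has_real_derivative d) (at_right h) \<and> \<bar>d\<bar> \<le> 1 / 2 \<and> \<bar>d\<bar> \<le> slope_bound v)"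

lemma right_slopes_bounded_const:
  assumes "v \<in> V"
  shows "right_slopes_bounded v (\<lambda>h. c)"
proof -
  have "0 \<le> slope_bound v"
    unfolding slope_bound_def using tau'_nonneg[OF assms] eps_pos by simp
  then show ?thesis
    unfolding right_slopes_bounded_def by (auto intro: DERIV_const)
qed

lemma right_slopes_bounded_min:
  assumes "right_slopes_bounded v g" "right_slopes_bounded v g'"
  shows "right_slopes_bounded v (\<lambda>h. min (g h) (g' h))"
  unfolding right_slopes_bounded_def
proof
  fix h
  obtain d where d: "(g has_real_derivative d) (at_right h)" "\<bar>d\<bar> \<le> 1 / 2" "\<bar>d\<bar> \<le> slope_bound v"
    using assms(1) unfolding right_slopes_bounded_def by blast
  obtain d' where d': "(g' has_real_derivative d') (at_right h)" "\<bar>d'\<bar> \<le> 1 / 2" "\<bar>d'\<bar> \<le> slope_bound v"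
    using assms(2) unfolding right_slopes_bounded_def by blast
  obtain e where "e \<in> {d, d'}" "((\<lambda>h. min (g h) (g' h)) has_real_derivative e) (at_right h)"
    using has_real_derivative_min_at_right[OF d(1) d'(1)] by blast
  with d d' show "\<exists>d. ((\<lambda>h. min (g h) (g' h)) has_real_derivative d) (at_right h)
      \<and> \<bar>d\<bar> \<le> 1 / 2 \<and> \<bar>d\<bar> \<le> slope_bound v"
    by auto
qed

lemma right_slopes_bounded_mfun:
  assumes "E v p" and "cluster_min_le p t"
  shows "right_slopes_bounded v (mfun \<tau> eps v (\<phi> p) t)"
proof (cases "t \<le> \<tau> v")
  case False
  then have "mfun \<tau> eps v (\<phi> p) t = (\<lambda>h. t)"
    by (simp add: mfun_def fun_eq_iff)
  then show ?thesis
    using assms(1) edge_in_V right_slopes_bounded_const by metis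
next
  case True
  have "\<tau> v - t \<le> tau' V E \<tau> v (1 + maxnbr_r V E eps \<phi> v)"
    using cluster_min_le_imp_diff_le_tau'[OF assms] .
  then have "min (\<tau> v - t) (eps / 2) \<le> tau' V E \<tau> v (1 + maxnbr_r V E eps \<phi> v)"
    by linarith
  then have "min (\<tau> v - t) (eps / 2) / eps \<le> slope_bound v"
    using eps_pos unfolding slope_bound_def by (simp add: divide_right_mono)
  moreover have "min (\<tau> v - t) (eps / 2) / eps \<le> (eps / 2) / eps"
    using eps_pos by (intro divide_right_mono min.cobounded2) simp
  moreover have "(eps / 2) / eps = 1 / 2"
    using eps_pos by simp
  ultimately have bounds: "min (\<tau> v - t) (eps / 2) / eps \<le> 1 / 2"
    "min (\<tau> v - t) (eps / 2) / eps \<le> slope_bound v"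
    by linarith+
  show ?thesis
    unfolding right_slopes_bounded_def
  proof
    fix h
    obtain d where "(mfun \<tau> eps v (\<phi> p) t has_real_derivative d) (at_right h)"
      "\<bar>d\<bar> \<le> min (\<tau> v - t) (eps / 2) / eps"
      using mfun_has_right_derivative[where \<tau> = \<tau> and v = v and t = t, OF eps_pos eps_le_1 True] by blast
    with bounds show "\<exists>d. (mfun \<tau> eps v (\<phi> p) t has_real_derivative d) (at_right h)
        \<and> \<bar>d\<bar> \<le> 1 / 2 \<and> \<bar>d\<bar> \<le> slope_bound v"
      by (meson order_trans)
  qed
qed

definition tau_update :: "'v list \<Rightarrow> ('v \<Rightarrow> real \<Rightarrow> real) \<Rightarrow> 'v \<Rightarrow> 'v \<Rightarrow> real \<Rightarrow> real" where
  "tau_update Ps tk p = (\<lambda>v h. if v \<in> set Ps \<or> \<not> E v p then tk v h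
     else min (tk v h) (mfun \<tau> eps v (\<phi> p) (tk p (\<phi> p)) h))"

lemma addalg_SucE:
  assumes run: "addalg V E \<tau> eps \<phi> n = (Ps, ss, ts)"
    and "distinct Ps" "length Ps < card V"
  obtains p where "p \<in> V" "p \<notin> set Ps"
    and "addalg V E \<tau> eps \<phi> (Suc n) = (Ps @ [p], ss @ [last ts p (\<phi> p)],
           ts @ [tau_update (Ps @ [p]) (last ts) p])"
proof -
  define R where "R = V - set Ps"
  define p where "p = (LEAST v. v \<in> R \<and> (\<forall>w\<in>R. last ts v (\<phi> v) \<le> last ts w (\<phi> w)))"
  have "\<not> V \<subseteq> set Ps"
    using assms(2,3) card_mono[of "set Ps" V] by (auto simp: distinct_card)
  then have "R \<noteq> {}" and "finite R"
    using finite_V by (auto simp: R_def)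
  \<comment> \<open>only membership of the chosen vertex matters below, not that it minimises\<close>
  then have "p \<in> R"
    unfolding p_def by (rule Least_argmin_in[rotated])
  moreover have "addalg V E \<tau> eps \<phi> (Suc n) = (Ps @ [p], ss @ [last ts p (\<phi> p)],
      ts @ [tau_update (Ps @ [p]) (last ts) p])"
    unfolding p_def R_def tau_update_def by (simp only: addalg.simps run Let_def prod.case)
  ultimately show ?thesis
    using that R_def by blast
qed

lemma addalg_shape:
  "n \<le> card V \<Longrightarrow> addalg V E \<tau> eps \<phi> n = (Ps, ss, ts) \<Longrightarrow>
    length Ps = n \<and> length ts = Suc n \<and> distinct Ps \<and> set Ps \<subseteq> V"
proof (induction n arbitrary: Ps ss ts)
  case 0
  then show ?case by auto
next
  case (Suc n)
  obtain Ps0 ss0 ts0 where run: "addalg V E \<tau> eps \<phi> n = (Ps0, ss0, ts0)"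
    by (cases "addalg V E \<tau> eps \<phi> n")
  then have "length Ps0 = n \<and> length ts0 = Suc n \<and> distinct Ps0 \<and> set Ps0 \<subseteq> V"
    using Suc by simp
  moreover from this obtain p where "p \<in> V" "p \<notin> set Ps0"
    and "addalg V E \<tau> eps \<phi> (Suc n) = (Ps0 @ [p], ss0 @ [last ts0 p (\<phi> p)],
      ts0 @ [tau_update (Ps0 @ [p]) (last ts0) p])"
    using addalg_SucE[OF run] Suc.prems(1) by (metis Suc_le_eq)
  ultimately show ?case
    using Suc.prems(2) by auto
qed

lemma addalg_cluster_min_le:
  "n \<le> card V \<Longrightarrow> addalg V E \<tau> eps \<phi> n = (Ps, ss, ts) \<Longrightarrow> v \<in> V \<Longrightarrow>
    cluster_min_le v (last ts v (\<phi> v))"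
proof (induction n arbitrary: Ps ss ts v)
  case 0
  then show ?case by (auto intro: cluster_min_le_self)
next
  case (Suc n)
  obtain Ps0 ss0 ts0 where run: "addalg V E \<tau> eps \<phi> n = (Ps0, ss0, ts0)"
    by (cases "addalg V E \<tau> eps \<phi> n")
  have IH: "\<And>w. w \<in> V \<Longrightarrow> cluster_min_le w (last ts0 w (\<phi> w))"
    using Suc.IH[OF _ run] Suc.prems(1) by simp
  obtain p where p: "p \<in> V"
    and step: "addalg V E \<tau> eps \<phi> (Suc n) = (Ps0 @ [p], ss0 @ [last ts0 p (\<phi> p)],
      ts0 @ [tau_update (Ps0 @ [p]) (last ts0) p])"
    using addalg_SucE[OF run] addalg_shape[OF _ run] Suc.prems(1) by (metis Suc_le_eq less_imp_le)
  have "cluster_min_le v (min (last ts0 v (\<phi> v)) (mfun \<tau> eps v (\<phi> p) (last ts0 p (\<phi> p)) (\<phi> v)))"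
    if "E v p"
    using cluster_min_le_min IH[OF Suc.prems(3)] cluster_min_le_mfun[OF that IH[OF p]] by blast
  then show ?case
    using Suc.prems(2,3) IH step by (auto simp: tau_update_def)
qed

lemma addalg_right_slopes_bounded:
  "n \<le> card V \<Longrightarrow> addalg V E \<tau> eps \<phi> n = (Ps, ss, ts) \<Longrightarrow> t \<in> set ts \<Longrightarrow> v \<in> V \<Longrightarrow>
    right_slopes_bounded v (t v)"
proof (induction n arbitrary: Ps ss ts t v)
  case 0
  then show ?case by (auto intro: right_slopes_bounded_const)
next
  case (Suc n)
  obtain Ps0 ss0 ts0 where run: "addalg V E \<tau> eps \<phi> n = (Ps0, ss0, ts0)"
    by (cases "addalg V E \<tau> eps \<phi> n")
  have "ts0 \<noteq> []"
    using addalg_shape[OF _ run] Suc.prems(1) by auto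
  then have IH: "\<And>w. w \<in> V \<Longrightarrow> right_slopes_bounded w (last ts0 w)"
    "\<And>t w. t \<in> set ts0 \<Longrightarrow> w \<in> V \<Longrightarrow> right_slopes_bounded w (t w)"
    using Suc.IH[OF _ run] Suc.prems(1) by auto
  obtain p where p: "p \<in> V"
    and step: "addalg V E \<tau> eps \<phi> (Suc n) = (Ps0 @ [p], ss0 @ [last ts0 p (\<phi> p)],
      ts0 @ [tau_update (Ps0 @ [p]) (last ts0) p])"
    using addalg_SucE[OF run] addalg_shape[OF _ run] Suc.prems(1) by (metis Suc_le_eq less_imp_le)
  have "t \<in> set ts0 \<or> t = tau_update (Ps0 @ [p]) (last ts0) p"
    using Suc.prems(2,3) unfolding step by auto
  then show ?case
  proof
    assume "t \<in> set ts0"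
    then show ?thesis
      using IH(2) Suc.prems(4) by blast
  next
    assume t: "t = tau_update (Ps0 @ [p]) (last ts0) p"
    show ?thesis
    proof (cases "v \<in> set (Ps0 @ [p]) \<or> \<not> E v p")
      case True
      then show ?thesis
        using IH(1) Suc.prems(4) by (simp add: t tau_update_def)
    next
      case False
      then have "right_slopes_bounded v (mfun \<tau> eps v (\<phi> p) (last ts0 p (\<phi> p)))"
        using right_slopes_bounded_mfun addalg_cluster_min_le[OF _ run p] Suc.prems(1) by simp
      then show ?thesis
        using False right_slopes_bounded_min IH(1)[OF Suc.prems(4)] by (simp add: t tau_update_def)
    qed
  qed
qed

lemma Jplus_Jminus_ge:
  "exp (- 2 * (\<Sum>v\<in>V. (slope_bound v)\<^sup>2)) \<le> Jplus V E \<tau> eps \<phi> * Jminus V E \<tau> eps \<phi>"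
proof -
  define N where "N = card V"
  obtain Ps ss ts where run: "addalg V E \<tau> eps \<phi> N = (Ps, ss, ts)"
    by (cases "addalg V E \<tau> eps \<phi> N")
  have shape: "length Ps = N" "length ts = Suc N" "distinct Ps" "set Ps \<subseteq> V"
    using addalg_shape[OF _ run] by (simp_all add: N_def)
  then have "set Ps = V"
    using finite_V by (simp add: N_def card_subset_eq distinct_card)
  define D where "D k = rderiv (alg_tau V E \<tau> eps \<phi> k (alg_P V E \<tau> eps \<phi> k)) (\<phi> (alg_P V E \<tau> eps \<phi> k))"
    for k
  have D: "\<bar>D k\<bar> \<le> 1 / 2" "\<bar>D k\<bar> \<le> slope_bound (Ps ! (k - 1))" if "k \<in> {1..N}" for k
  proof -
    have "alg_P V E \<tau> eps \<phi> k = Ps ! (k - 1)" "alg_tau V E \<tau> eps \<phi> k = ts ! (k - 1)"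
      using run by (simp_all add: alg_P_def alg_tau_def N_def)
    moreover have "Ps ! (k - 1) \<in> V" "ts ! (k - 1) \<in> set ts"
      using that shape by auto
    ultimately show "\<bar>D k\<bar> \<le> 1 / 2" "\<bar>D k\<bar> \<le> slope_bound (Ps ! (k - 1))"
      using addalg_right_slopes_bounded[OF _ run] rderiv_eqI
      unfolding D_def right_slopes_bounded_def N_def by (metis order_refl)+
  qed
  have "(\<Sum>k=1..N. (slope_bound (Ps ! (k - 1)))\<^sup>2) = (\<Sum>v\<in>V. (slope_bound v)\<^sup>2)"
    using sum.reindex_bij_betw[OF bij_betw_nth[OF shape(3) refl refl], of "\<lambda>v. (slope_bound v)\<^sup>2"]
    by (simp add: sum.atLeast1_atMost_eq shape(1) \<open>set Ps = V\<close> lessThan_atLeast0)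
  moreover have "Jplus V E \<tau> eps \<phi> * Jminus V E \<tau> eps \<phi> = (\<Prod>k=1..N. 1 - (D k)\<^sup>2)"
    unfolding Jplus_def Jminus_def prod.distrib[symmetric] D_def N_def
    by (simp add: power2_eq_square algebra_simps)
  ultimately show ?thesis
    using exp_le_prod_one_minus_square[of "{1..N}" D "\<lambda>k. slope_bound (Ps ! (k - 1))"] D by simp
qed

end

theorem lemma2p7:
  fixes V :: "'v::linorder set" and E :: "'v \<Rightarrow> 'v \<Rightarrow> bool"
    and \<tau> :: "'v \<Rightarrow> real" and eps :: real and \<phi> :: "'v \<Rightarrow> real"
  assumes "is_graph V E" and "connected_graph V E"
    and "\<forall>v\<in>V. \<tau> v \<ge> 0"
    and "0 < eps" and "eps \<le> 1/2"
    and "ereal (real (Mrad V E eps \<phi>)) \<le> Lcap V E \<tau> eps"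
  shows "sqrt (Jplus V E \<tau> eps \<phi> * Jminus V E \<tau> eps \<phi>)
           \<ge> exp (- (1 / eps\<^sup>2) * (\<Sum>v\<in>V. (tau' V E \<tau> v (1 + maxnbr_r V E eps \<phi> v))\<^sup>2))"
proof -
  interpret finite_connected_graph V E
    using assms(1,2) by unfold_locales
  obtain k where k: "Suc (Mrad V E eps \<phi>) \<le> k" "\<forall>v\<in>V. tau' V E \<tau> v k \<le> eps / 2"
    using le_LcapE[OF assms(6)] .
  interpret addition_algorithm V E \<tau> eps \<phi>
  proof unfold_locales
    show "0 < eps" "eps \<le> 1"
      using assms(4,5) by simp_all
    show "\<tau> v - \<tau> w \<le> eps / 2" if "v \<in> V" "w \<in> V" "gdist V E v w \<le> Suc (Mrad V E eps \<phi>)" for v w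
      using diff_le_tau'[of v w k \<tau>] that k by fastforce
  qed
  define Y where "Y = 1 / eps\<^sup>2 * (\<Sum>v\<in>V. (tau' V E \<tau> v (1 + maxnbr_r V E eps \<phi> v))\<^sup>2)"
  have sum_slope_bound: "(\<Sum>v\<in>V. (slope_bound v)\<^sup>2) = Y"
    by (simp add: Y_def slope_bound_def power_divide sum_divide_distrib)
  have "exp (- 2 * Y) = exp (- Y) * exp (- Y)"
    by (simp flip: exp_add)
  then have "exp (- Y) = sqrt (exp (- 2 * Y))"
    by simp
  also have "\<dots> \<le> sqrt (Jplus V E \<tau> eps \<phi> * Jminus V E \<tau> eps \<phi>)"
    using Jplus_Jminus_ge sum_slope_bound by (simp add: real_sqrt_le_mono)
  finally show ?thesis
    unfolding Y_def by simp
qed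

end
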